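(* Let $G=(V,E)$ be a finite directed acyclic graph, $G'=(V,E')$ its minimum equivalent graph, $S$ a set of streams, and $f:V\to S$ a stream assignment. A synchronization plan $\Lambda\subseteq E$ is safe for $f$ on $G$ if and only if $\Lambda$ is safe for $f$ on $G'$.
   Context: A path from $u$ to $v$ in a directed graph is a nonempty sequence of edges $(u,w_1),\dots,(w_k,v)$ of that graph. The minimum equivalent graph (MEG) of a finite DAG $G=(V,E)$ is the subgraph $G'=(V,E')$, $E'\subseteq E$, with the same vertex set and the smallest number of edges among subgraphs having the same reachability relation as $G$. A stream assignment is any function $f:V\to S$. A synchronization plan is a set $\Lambda$ of edges. For a directed graph $H=(V,E_H)$ and a stream assignment $f$, a synchronization plan $\Lambda$ is safe for $f$ on $H$ if for every edge $(u,v)\in E_H$, either $f(u)=f(v)$, or there exists a path $P\subseteq E_H$ from $u$ to $v$ in $H$ with $P\cap\Lambda\neq\emptyset$. *)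

theory Defs
  imports Main
begin

definition finite_dag :: "'a set \<Rightarrow> ('a \<times> 'a) set \<Rightarrow> bool" where
  "finite_dag V E \<longleftrightarrow> finite V \<and> E \<subseteq> V \<times> V \<and> acyclic E"

inductive is_path :: "('a \<times> 'a) set \<Rightarrow> 'a \<Rightarrow> 'a \<Rightarrow> ('a \<times> 'a) list \<Rightarrow> bool"
  for H where
  single: "(u, v) \<in> H \<Longrightarrow> is_path H u v [(u, v)]"
| cons: "(u, w) \<in> H \<Longrightarrow> is_path H w v P \<Longrightarrow> is_path H u v ((u, w) # P)"

definition is_MEG :: "'a set \<Rightarrow> ('a \<times> 'a) set \<Rightarrow> ('a \<times> 'a) set \<Rightarrow> bool" where
  "is_MEG V E E' \<longleftrightarrow> E' \<subseteq> E \<and> E'\<^sup>+ = E\<^sup>+ \<and>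
     (\<forall>E''. E'' \<subseteq> E \<and> E''\<^sup>+ = E\<^sup>+ \<longrightarrow> card E' \<le> card E'')"

definition safe :: "('a \<times> 'a) set \<Rightarrow> ('a \<Rightarrow> 's) \<Rightarrow> ('a \<times> 'a) set \<Rightarrow> bool" where
  "safe H f \<Lambda> \<longleftrightarrow> (\<forall>(u, v) \<in> H. f u = f v \<or>
     (\<exists>P. is_path H u v P \<and> set P \<inter> \<Lambda> \<noteq> {}))"

end

theory Submission
  imports Defs
begin

text \<open>An edge (u, v) of the minimum equivalent graph is the only path of G from u to v: a
  longer path through some w would, by acyclicity, avoid the edge, so the edge could be deleted
  without changing reachability. Hence a plan safe on G is safe on G'. Conversely, safety on G'
  extends from edges to arbitrary paths (the stream changes either before the last edge or on
  it), and every edge of G is joined by a path of G'.\<close>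

lemma is_path_trancl: "is_path H u v P \<Longrightarrow> (u, v) \<in> H\<^sup>+"
  by (induction rule: is_path.induct) auto

lemma is_path_append: "is_path H u w P \<Longrightarrow> is_path H w v Q \<Longrightarrow> is_path H u v (P @ Q)"
  by (induction rule: is_path.induct) (auto intro: is_path.intros)

lemma is_path_mono: "is_path H u v P \<Longrightarrow> H \<subseteq> H' \<Longrightarrow> is_path H' u v P"
  by (induction rule: is_path.induct) (auto intro: is_path.intros)

lemma trancl_imp_is_path: "(u, v) \<in> H\<^sup>+ \<Longrightarrow> \<exists>P. is_path H u v P"
proof (induction rule: trancl_induct)
  case (base v)
  then show ?case by (blast intro: is_path.single)
next
  case (step w v)
  then obtain P where "is_path H u w P" by blast
  with step.hyps(2) have "is_path H u v (P @ [(w, v)])"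
    by (blast intro: is_path_append is_path.single)
  then show ?case by blast
qed

lemma safeI:
  assumes "\<And>u v. (u, v) \<in> H \<Longrightarrow> f u \<noteq> f v \<Longrightarrow> \<exists>P. is_path H u v P \<and> set P \<inter> \<Lambda> \<noteq> {}"
  shows "safe H f \<Lambda>"
  using assms unfolding safe_def by blast

lemma safeD:
  assumes "safe H f \<Lambda>" "(u, v) \<in> H" "f u \<noteq> f v"
  shows "\<exists>P. is_path H u v P \<and> set P \<inter> \<Lambda> \<noteq> {}"
  using assms unfolding safe_def by blast

lemma safe_trancl:
  assumes safe: "safe H f \<Lambda>" and uv: "(u, v) \<in> H\<^sup>+" and ne: "f u \<noteq> f v"
  shows "\<exists>P. is_path H u v P \<and> set P \<inter> \<Lambda> \<noteq> {}"
  using uv ne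
proof (induction rule: trancl_induct)
  case (base v)
  then show ?case by (rule safeD[OF safe])
next
  case (step w v)
  show ?case
  proof (cases "f u = f w")
    case True
    with step.prems have "f w \<noteq> f v" by simp
    then obtain Q where Q: "is_path H w v Q" "set Q \<inter> \<Lambda> \<noteq> {}"
      using safeD[OF safe step.hyps(2)] by blast
    obtain P where "is_path H u w P" using trancl_imp_is_path[OF step.hyps(1)] by blast
    with Q have "is_path H u v (P @ Q) \<and> set (P @ Q) \<inter> \<Lambda> \<noteq> {}"
      by (auto intro: is_path_append)
    then show ?thesis by blast
  next
    case False
    then obtain P where P: "is_path H u w P" "set P \<inter> \<Lambda> \<noteq> {}" using step.IH by blast
    with step.hyps(2) have "is_path H u v (P @ [(w, v)]) \<and> set (P @ [(w, v)]) \<inter> \<Lambda> \<noteq> {}"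
      by (auto intro: is_path_append is_path.single)
    then show ?thesis by blast
  qed
qed

lemma safe_if_subset_trancl:
  assumes "safe H f \<Lambda>" "H \<subseteq> G" "G \<subseteq> H\<^sup>+"
  shows "safe G f \<Lambda>"
proof (rule safeI)
  fix u v
  assume "(u, v) \<in> G" and ne: "f u \<noteq> f v"
  with assms(3) have "(u, v) \<in> H\<^sup>+" by blast
  from safe_trancl[OF assms(1) this ne] obtain P
    where "is_path H u v P" "set P \<inter> \<Lambda> \<noteq> {}" by blast
  with is_path_mono[OF _ assms(2)] show "\<exists>P. is_path G u v P \<and> set P \<inter> \<Lambda> \<noteq> {}"
    by blast
qed

lemma safe_if_edges_unique_paths:
  assumes "safe G f \<Lambda>" "H \<subseteq> G"
    and unique: "\<And>u v P. (u, v) \<in> H \<Longrightarrow> is_path G u v P \<Longrightarrow> P = [(u, v)]"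
  shows "safe H f \<Lambda>"
proof (rule safeI)
  fix u v
  assume uv: "(u, v) \<in> H" and ne: "f u \<noteq> f v"
  with assms(2) have "(u, v) \<in> G" by blast
  from safeD[OF assms(1) this ne] obtain P
    where "is_path G u v P" "set P \<inter> \<Lambda> \<noteq> {}" by blast
  with unique[OF uv] is_path.single[OF uv] show "\<exists>P. is_path H u v P \<and> set P \<inter> \<Lambda> \<noteq> {}"
    by blast
qed

lemma rtrancl_avoid_edge_or_through:
  assumes "(a, b) \<in> R\<^sup>*"
  shows "(a, b) \<in> (R - {(u, v)})\<^sup>* \<or> (a, u) \<in> (R - {(u, v)})\<^sup>* \<and> (v, b) \<in> (R - {(u, v)})\<^sup>*"
  using assms
proof (induction rule: rtrancl_induct)
  case base
  then show ?case by simp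
next
  case (step y z)
  then show ?case
    by (cases "(y, z) = (u, v)") (auto intro: rtrancl_into_rtrancl)
qed

lemma acyclic_trancl_Diff_edge:
  assumes acyc: "acyclic R" and uw: "(u, w) \<in> R\<^sup>+" and wv: "(w, v) \<in> R\<^sup>+"
  shows "(u, v) \<in> (R - {(u, v)})\<^sup>+"
proof -
  let ?R = "R - {(u, v)}"
  have no_cycle: "(x, y) \<in> R\<^sup>+ \<Longrightarrow> (y, x) \<in> R\<^sup>* \<Longrightarrow> False" for x y
    using acyc unfolding acyclic_def by (meson rtrancl_trancl_trancl)
  have R_sub: "?R\<^sup>* \<subseteq> R\<^sup>*" by (simp add: rtrancl_mono)
  have "(u, w) \<in> ?R\<^sup>*"
    using rtrancl_avoid_edge_or_through[OF trancl_into_rtrancl[OF uw], of u v]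
      R_sub no_cycle[OF wv] by blast
  moreover have "(w, v) \<in> ?R\<^sup>*"
    using rtrancl_avoid_edge_or_through[OF trancl_into_rtrancl[OF wv], of u v]
      R_sub no_cycle[OF uw] by blast
  ultimately have "(u, v) \<in> ?R\<^sup>*" by (rule rtrancl_trans)
  moreover have "u \<noteq> v" using no_cycle[OF uw] trancl_into_rtrancl[OF wv] by blast
  ultimately show ?thesis by (simp add: rtrancl_eq_or_trancl)
qed

lemma trancl_Diff_redundant_edge:
  assumes "e \<in> (R - {e})\<^sup>+"
  shows "(R - {e})\<^sup>+ = R\<^sup>+"
proof
  show "(R - {e})\<^sup>+ \<subseteq> R\<^sup>+" by (simp add: trancl_mono_subset)
  have "R \<subseteq> (R - {e})\<^sup>+" using assms by auto
  then show "R\<^sup>+ \<subseteq> (R - {e})\<^sup>+" by (metis trancl_id trancl_mono_subset trans_trancl)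
qed

lemma MEG_edge_unique_path:
  assumes dag: "finite_dag V E" and meg: "is_MEG V E E'"
    and uv: "(u, v) \<in> E'" and P: "is_path E u v P"
  shows "P = [(u, v)]"
  using P
proof (cases rule: is_path.cases)
  case single
  then show ?thesis by simp
next
  case (cons w Q)
  have sub: "E' \<subseteq> E" and cl: "E'\<^sup>+ = E\<^sup>+" using meg unfolding is_MEG_def by auto
  have "acyclic E'" using dag cl unfolding finite_dag_def acyclic_def by simp
  moreover have "(u, w) \<in> E'\<^sup>+" "(w, v) \<in> E'\<^sup>+"
    using cons is_path_trancl[of E w v Q] cl by auto
  ultimately have "(u, v) \<in> (E' - {(u, v)})\<^sup>+" by (rule acyclic_trancl_Diff_edge)
  then have "(E' - {(u, v)})\<^sup>+ = E\<^sup>+" unfolding cl[symmetric] by (rule trancl_Diff_redundant_edge)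
  with sub meg have "card E' \<le> card (E' - {(u, v)})" unfolding is_MEG_def by blast
  moreover have "finite E'"
    using dag sub unfolding finite_dag_def by (meson finite_SigmaI finite_subset)
  with uv have "card (E' - {(u, v)}) < card E'" by (intro card_Diff1_less)
  ultimately show ?thesis by linarith
qed

theorem lemma2:
  fixes V :: "'a set" and E E' \<Lambda> :: "('a \<times> 'a) set"
    and S :: "'s set" and f :: "'a \<Rightarrow> 's"
  assumes "finite_dag V E"
    and "is_MEG V E E'"
    and "\<forall>v\<in>V. f v \<in> S"
    and "\<Lambda> \<subseteq> E"
  shows "safe E f \<Lambda> \<longleftrightarrow> safe E' f \<Lambda>"
proof
  have sub: "E' \<subseteq> E" and cl: "E'\<^sup>+ = E\<^sup>+" using assms(2) unfolding is_MEG_def by auto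
  show "safe E' f \<Lambda>" if "safe E f \<Lambda>"
    using that sub MEG_edge_unique_path[OF assms(1,2)] by (rule safe_if_edges_unique_paths)
  show "safe E f \<Lambda>" if "safe E' f \<Lambda>"
    using that sub by (rule safe_if_subset_trancl) (auto simp: cl)
qed

end
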